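(* Let $\mathbf{P}$ be a finite poset with a metric $d_{\mathbf{P}}$ and let $\sigma:\mathbf{P}\to\mathbf{P}$ be a monotone map with $x\le\sigma(x)$ for all $x\in\mathbf{P}$. On $\hat{\mathbf{Q}}=\mathbf{P}\times\{0,1\}$ define $(x,i)\le(y,j)$ iff $\sigma(x)\le y$ when $i\neq j$, and iff $x\le y$ when $i=j$. Write $x_L=(x,0)$, $x_R=(x,1)$. Then: (1) this relation is a preorder on $\hat{\mathbf{Q}}$; (2) for the associated equivalence relation $\sim$ ($u\sim v$ iff $u\le v$ and $v\le u$), the class of $(x,i)$ is $\{x_L,x_R\}$ if $\sigma(x)=x$ and $\{(x,i)\}$ otherwise; let $\mathbf{Q}=\hat{\mathbf{Q}}/\!\sim$ be the quotient poset with classes $[u]$; (3) the maps $g:\mathbf{P}\to\mathbf{Q}$, $g(x)=[x_L]$, and $f:\mathbf{Q}\to\mathbf{P}$, $f([x_L])=x$, $f([x_R])=\sigma(x)$, are well defined and form a Galois insertion $f:\mathbf{Q}\rightleftarrows\mathbf{P}:g$; (4) similarly $i:\mathbf{P}\to\mathbf{Q}$, $i(x)=[x_R]$, and $h:\mathbf{Q}\to\mathbf{P}$, $h([x_L])=\sigma(x)$, $h([x_R])=x$, form a Galois insertion $h:\mathbf{Q}\rightleftarrows\mathbf{P}:i$; (5) for $\mathbf{P}$-modules $M,N$, if $\Gamma$ is a $\mathbf{Q}$-module with $g^*\Gamma\cong M$ and $i^*\Gamma\cong N$, then $(\mathbf{Q},f\dashv g,h\dashv i,\Gamma)$ is a Galois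 coupling of $(M,N)$ with $\mathrm{cost}(\Gamma)=\sup_{x\in\mathbf{P}}d_{\mathbf{P}}(x,\sigma(x))$; in particular, if $M=N\circ\sigma$, then $\Gamma:=h^*N=N\circ h$ gives such a Galois coupling.
   Context: Fix a field $k$; $\mathrm{vect}$ is the category of finite-dimensional $k$-vector spaces. Finite posets are categories with a unique morphism $x\to y$ iff $x\le y$; a $\mathbf{P}$-module is a functor $\mathbf{P}\to\mathrm{vect}$; for a monotone map $g$, $g^*$ is precomposition with $g$. A Galois insertion $f:\mathbf{Q}\rightleftarrows\mathbf{P}:g$ consists of monotone maps $f:\mathbf{Q}\to\mathbf{P}$, $g:\mathbf{P}\to\mathbf{Q}$ with $f(u)\le x\iff u\le g(x)$ for all $u,x$, and $f\circ g=\mathrm{id}_{\mathbf{P}}$. A Galois coupling of $(M,N)$ is $(\mathbf{Q},f\dashv g,h\dashv i,\Gamma)$ with $\mathbf{Q}$ a finite poset, $f:\mathbf{Q}\rightleftarrows\mathbf{P}:g$ and $h:\mathbf{Q}\rightleftarrows\mathbf{P}:i$ Galois insertions, and a $\mathbf{Q}$-module $\Gamma$ with $g^*\Gamma\cong M$, $i^*\Gamma\cong N$; its cost is $\mathrm{cost}(\Gamma)=\sup_{q\in\mathbf{Q}}d_{\mathbf{P}}(f(q),h(q))$. *)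

theory Defs
  imports Complex_Main "Jordan_Normal_Form.Matrix"
begin

(* A finite-dimensional k-vector space is represented (up to iso) by its dimension,
   and a linear map by a matrix; a module over (C, lee) is a pair (dim, mp). *)
type_synonym ('c, 'k) pmodule = "('c \<Rightarrow> nat) \<times> ('c \<Rightarrow> 'c \<Rightarrow> 'k mat)"

definition is_metric :: "('a \<Rightarrow> 'a \<Rightarrow> real) \<Rightarrow> bool" where
  "is_metric d \<longleftrightarrow> (\<forall>x y. 0 \<le> d x y) \<and> (\<forall>x y. d x y = 0 \<longleftrightarrow> x = y)
     \<and> (\<forall>x y. d x y = d y x) \<and> (\<forall>x y z. d x z \<le> d x y + d y z)"

definition preorder_rel :: "('b \<Rightarrow> 'b \<Rightarrow> bool) \<Rightarrow> bool" where
  "preorder_rel r \<longleftrightarrow> (\<forall>u. r u u) \<and> (\<forall>u v w. r u v \<longrightarrow> r v w \<longrightarrow> r u w)"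

definition po_on :: "'b set \<Rightarrow> ('b \<Rightarrow> 'b \<Rightarrow> bool) \<Rightarrow> bool" where
  "po_on C r \<longleftrightarrow> (\<forall>u\<in>C. r u u) \<and> (\<forall>u\<in>C. \<forall>v\<in>C. r u v \<longrightarrow> r v u \<longrightarrow> u = v)
     \<and> (\<forall>u\<in>C. \<forall>v\<in>C. \<forall>w\<in>C. r u v \<longrightarrow> r v w \<longrightarrow> r u w)"

(* the relation on Q^ = P x {0,1}; False = 0 (L), True = 1 (R) *)
definition qhle :: "('a::order \<Rightarrow> 'a) \<Rightarrow> 'a \<times> bool \<Rightarrow> 'a \<times> bool \<Rightarrow> bool" where
  "qhle \<sigma> u v = (if snd u \<noteq> snd v then \<sigma> (fst u) \<le> fst v else fst u \<le> fst v)"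

definition qcls :: "('a::order \<Rightarrow> 'a) \<Rightarrow> 'a \<times> bool \<Rightarrow> ('a \<times> bool) set" where
  "qcls \<sigma> u = {v. qhle \<sigma> u v \<and> qhle \<sigma> v u}"

definition Qset :: "('a::order \<Rightarrow> 'a) \<Rightarrow> ('a \<times> bool) set set" where
  "Qset \<sigma> = range (qcls \<sigma>)"

definition Qle :: "('a::order \<Rightarrow> 'a) \<Rightarrow> ('a \<times> bool) set \<Rightarrow> ('a \<times> bool) set \<Rightarrow> bool" where
  "Qle \<sigma> A B \<longleftrightarrow> (\<exists>u v. A = qcls \<sigma> u \<and> B = qcls \<sigma> v \<and> qhle \<sigma> u v)"

definition gmap :: "('a::order \<Rightarrow> 'a) \<Rightarrow> 'a \<Rightarrow> ('a \<times> bool) set" where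
  "gmap \<sigma> x = qcls \<sigma> (x, False)"

definition imap :: "('a::order \<Rightarrow> 'a) \<Rightarrow> 'a \<Rightarrow> ('a \<times> bool) set" where
  "imap \<sigma> x = qcls \<sigma> (x, True)"

definition fmap :: "('a::order \<Rightarrow> 'a) \<Rightarrow> ('a \<times> bool) set \<Rightarrow> 'a" where
  "fmap \<sigma> A = (THE y. \<exists>x. (A = qcls \<sigma> (x, False) \<and> y = x) \<or> (A = qcls \<sigma> (x, True) \<and> y = \<sigma> x))"

definition hmap :: "('a::order \<Rightarrow> 'a) \<Rightarrow> ('a \<times> bool) set \<Rightarrow> 'a" where
  "hmap \<sigma> A = (THE y. \<exists>x. (A = qcls \<sigma> (x, False) \<and> y = \<sigma> x) \<or> (A = qcls \<sigma> (x, True) \<and> y = x))"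

definition galois_insertion ::
  "'q set \<Rightarrow> ('q \<Rightarrow> 'q \<Rightarrow> bool) \<Rightarrow> ('q \<Rightarrow> 'a::order) \<Rightarrow> ('a \<Rightarrow> 'q) \<Rightarrow> bool" where
  "galois_insertion C leQ f g \<longleftrightarrow>
     (\<forall>x. g x \<in> C)
   \<and> (\<forall>q\<in>C. \<forall>q'\<in>C. leQ q q' \<longrightarrow> f q \<le> f q')
   \<and> (\<forall>x y. x \<le> y \<longrightarrow> leQ (g x) (g y))
   \<and> (\<forall>q\<in>C. \<forall>x. f q \<le> x \<longleftrightarrow> leQ q (g x))
   \<and> (\<forall>x. f (g x) = x)"

definition is_module :: "'c set \<Rightarrow> ('c \<Rightarrow> 'c \<Rightarrow> bool) \<Rightarrow> ('c, 'k::field) pmodule \<Rightarrow> bool" where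
  "is_module C lee M \<longleftrightarrow>
     (\<forall>x\<in>C. snd M x x = 1\<^sub>m (fst M x))
   \<and> (\<forall>x\<in>C. \<forall>y\<in>C. lee x y \<longrightarrow> snd M x y \<in> carrier_mat (fst M y) (fst M x))
   \<and> (\<forall>x\<in>C. \<forall>y\<in>C. \<forall>z\<in>C. lee x y \<longrightarrow> lee y z \<longrightarrow> snd M x z = snd M y z * snd M x y)"

definition mod_iso :: "'c set \<Rightarrow> ('c \<Rightarrow> 'c \<Rightarrow> bool) \<Rightarrow> ('c, 'k::field) pmodule \<Rightarrow> ('c, 'k) pmodule \<Rightarrow> bool" where
  "mod_iso C lee M N \<longleftrightarrow> (\<exists>\<phi>.
      (\<forall>x\<in>C. \<phi> x \<in> carrier_mat (fst N x) (fst M x) \<and> invertible_mat (\<phi> x))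
    \<and> (\<forall>x\<in>C. \<forall>y\<in>C. lee x y \<longrightarrow> \<phi> y * snd M x y = snd N x y * \<phi> x))"

definition pullback :: "('c \<Rightarrow> 'e) \<Rightarrow> ('e, 'k) pmodule \<Rightarrow> ('c, 'k) pmodule" where
  "pullback g M = (fst M \<circ> g, \<lambda>x y. snd M (g x) (g y))"

definition galois_coupling ::
  "'q set \<Rightarrow> ('q \<Rightarrow> 'q \<Rightarrow> bool) \<Rightarrow> ('q \<Rightarrow> 'a::order) \<Rightarrow> ('a \<Rightarrow> 'q) \<Rightarrow> ('q \<Rightarrow> 'a) \<Rightarrow> ('a \<Rightarrow> 'q)
   \<Rightarrow> ('q, 'k::field) pmodule \<Rightarrow> ('a, 'k) pmodule \<Rightarrow> ('a, 'k) pmodule \<Rightarrow> bool" where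
  "galois_coupling C leQ f g h i \<Gamma> M N \<longleftrightarrow>
     finite C \<and> po_on C leQ
   \<and> galois_insertion C leQ f g \<and> galois_insertion C leQ h i
   \<and> is_module C leQ \<Gamma>
   \<and> mod_iso UNIV (\<le>) (pullback g \<Gamma>) M \<and> mod_iso UNIV (\<le>) (pullback i \<Gamma>) N"

definition coupling_cost :: "'q set \<Rightarrow> ('a \<Rightarrow> 'a \<Rightarrow> real) \<Rightarrow> ('q \<Rightarrow> 'a) \<Rightarrow> ('q \<Rightarrow> 'a) \<Rightarrow> real" where
  "coupling_cost C d f h = (SUP q\<in>C. d (f q) (h q))"

end

theory Submission
  imports Defs
begin

(* The two-sheet relation is transitive because sigma is monotone and inflationary, and x_L, x_R
   are identified exactly at fixed points of sigma.  The adjunctions f [u] <= x iff [u] <= [x_L]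
   and h [u] <= x iff [u] <= [x_R] are literally the definition of the order, and everything else
   in a Galois insertion follows from them.  Since h o g = sigma and h o i = id, the pullback of N
   along h restricts to N o sigma and N on the two sheets; on every class (f, h) takes the values
   (x, sigma x) or (sigma x, x), which gives the cost. *)

lemma qhle_refl: "qhle \<sigma> u u"
  by (simp add: qhle_def)

lemma finite_Qset: "finite (UNIV :: 'a::order set) \<Longrightarrow> finite (Qset (\<sigma> :: 'a \<Rightarrow> 'a))"
  unfolding Qset_def by (simp add: finite_Prod_UNIV)

lemma mod_iso_refl:
  assumes "is_module C lee M"
  shows "mod_iso C lee M M"
  unfolding mod_iso_def
proof (intro exI[of _ "\<lambda>x. 1\<^sub>m (fst M x)"] conjI ballI impI)
  fix x
  show "1\<^sub>m (fst M x) \<in> carrier_mat (fst M x) (fst M x)" by simp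
  show "invertible_mat (1\<^sub>m (fst M x))"
    unfolding invertible_mat_def inverts_mat_def by (intro conjI exI[of _ "1\<^sub>m (fst M x)"]) auto
next
  fix x y assume "x \<in> C" "y \<in> C" "lee x y"
  then have "snd M x y \<in> carrier_mat (fst M y) (fst M x)"
    using assms unfolding is_module_def by blast
  then show "1\<^sub>m (fst M y) * snd M x y = snd M x y * 1\<^sub>m (fst M x)" by simp
qed

lemma is_module_pullback:
  assumes "is_module C lee M" and "g ` C' \<subseteq> C"
    and "\<And>x y. x \<in> C' \<Longrightarrow> y \<in> C' \<Longrightarrow> lee' x y \<Longrightarrow> lee (g x) (g y)"
  shows "is_module C' lee' (pullback g M)"
  using assms unfolding is_module_def pullback_def by (simp add: image_subset_iff)

lemma pullback_pullback: "pullback g (pullback h M) = pullback (h \<circ> g) M"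
  by (simp add: pullback_def comp_assoc)

lemma pullback_id: "pullback id M = M"
  by (simp add: pullback_def)

locale inflationary_mono =
  fixes \<sigma> :: "'a::order \<Rightarrow> 'a"
  assumes mono_sigma: "mono \<sigma>"
    and le_sigma: "x \<le> \<sigma> x"
begin

lemma qhle_trans: "qhle \<sigma> u v \<Longrightarrow> qhle \<sigma> v w \<Longrightarrow> qhle \<sigma> u w"
proof -
  obtain x i y j z k where uvw: "u = (x, i)" "v = (y, j)" "w = (z, k)"
    by (cases u, cases v, cases w) blast
  have "x \<le> y \<Longrightarrow> \<sigma> x \<le> \<sigma> y" "y \<le> z \<Longrightarrow> \<sigma> y \<le> \<sigma> z"
    using mono_sigma by (simp_all add: mono_def)
  moreover note le_sigma[of x] le_sigma[of y] le_sigma[of z]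
  moreover assume "qhle \<sigma> u v" "qhle \<sigma> v w"
  ultimately show ?thesis
    unfolding qhle_def uvw by (cases i; cases j; cases k) (auto dest: order_trans)
qed

lemma preorder_rel_qhle: "preorder_rel (qhle \<sigma>)"
  unfolding preorder_rel_def using qhle_refl qhle_trans by blast

lemma qcls_eq_iff: "qcls \<sigma> u = qcls \<sigma> v \<longleftrightarrow> qhle \<sigma> u v \<and> qhle \<sigma> v u"
proof
  assume "qcls \<sigma> u = qcls \<sigma> v"
  then have "v \<in> qcls \<sigma> u" by (simp add: qcls_def qhle_refl)
  then show "qhle \<sigma> u v \<and> qhle \<sigma> v u" by (simp add: qcls_def)
next
  assume "qhle \<sigma> u v \<and> qhle \<sigma> v u"
  then show "qcls \<sigma> u = qcls \<sigma> v" unfolding qcls_def using qhle_trans by blast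
qed

lemma mem_qcls_iff: "v \<in> qcls \<sigma> u \<longleftrightarrow> qcls \<sigma> u = qcls \<sigma> v"
  by (subst qcls_eq_iff) (simp add: qcls_def)

lemma qcls_eq_qcls_iff: "qcls \<sigma> (x, i) = qcls \<sigma> (y, j) \<longleftrightarrow> y = x \<and> (j = i \<or> \<sigma> x = x)"
  using le_sigma[of x] le_sigma[of y] unfolding qcls_eq_iff qhle_def
  by (cases i; cases j) (auto intro: order.antisym order_trans)

lemma qcls_explicit:
  "qcls \<sigma> (x, i) = (if \<sigma> x = x then {(x, False), (x, True)} else {(x, i)})"
proof -
  have "v \<in> qcls \<sigma> (x, i) \<longleftrightarrow> fst v = x \<and> (snd v = i \<or> \<sigma> x = x)" for v
    using qcls_eq_qcls_iff[of x i "fst v" "snd v"] by (simp add: mem_qcls_iff)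
  then show ?thesis
    by (auto simp: set_eq_iff prod_eq_iff)
qed

lemma Qle_qcls_iff: "Qle \<sigma> (qcls \<sigma> u) (qcls \<sigma> v) \<longleftrightarrow> qhle \<sigma> u v"
  unfolding Qle_def qcls_eq_iff by (meson qhle_refl qhle_trans)

lemma po_on_Qle: "po_on (Qset \<sigma>) (Qle \<sigma>)"
  unfolding po_on_def Qset_def by (simp add: Qle_qcls_iff qcls_eq_iff qhle_refl) (meson qhle_trans)

text \<open>The descriptions defining \<^const>\<open>fmap\<close> and \<^const>\<open>hmap\<close> are unambiguous because
  \<open>x\<^sub>L\<close> and \<open>x\<^sub>R\<close> are identified only at fixed points of \<open>\<sigma>\<close>.\<close>

lemma The_qcls_value:
  assumes "\<And>x. \<sigma> x = x \<Longrightarrow> a x = b x"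
  shows "(THE y. \<exists>x. (qcls \<sigma> u = qcls \<sigma> (x, False) \<and> y = a x)
                    \<or> (qcls \<sigma> u = qcls \<sigma> (x, True) \<and> y = b x))
       = (if snd u then b (fst u) else a (fst u))"
proof (rule the_equality)
  show "\<exists>x. (qcls \<sigma> u = qcls \<sigma> (x, False) \<and> (if snd u then b (fst u) else a (fst u)) = a x)
          \<or> (qcls \<sigma> u = qcls \<sigma> (x, True) \<and> (if snd u then b (fst u) else a (fst u)) = b x)"
    by (cases u; cases "snd u") auto
next
  fix y
  assume "\<exists>x. (qcls \<sigma> u = qcls \<sigma> (x, False) \<and> y = a x) \<or> (qcls \<sigma> u = qcls \<sigma> (x, True) \<and> y = b x)"
  then show "y = (if snd u then b (fst u) else a (fst u))"
    using assms by (cases u) (auto simp: qcls_eq_qcls_iff)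
qed

lemma fmap_qcls: "fmap \<sigma> (qcls \<sigma> u) = (if snd u then \<sigma> (fst u) else fst u)"
  unfolding fmap_def using The_qcls_value[of id \<sigma>] by simp

lemma hmap_qcls: "hmap \<sigma> (qcls \<sigma> u) = (if snd u then fst u else \<sigma> (fst u))"
  unfolding hmap_def using The_qcls_value[of \<sigma> id] by simp

lemma galois_insertion_qclsI:
  assumes F: "\<And>u. Fq (qcls \<sigma> u) = F u"
    and adj: "\<And>u x. F u \<le> x \<longleftrightarrow> qhle \<sigma> u (x, j)"
  shows "galois_insertion (Qset \<sigma>) (Qle \<sigma>) Fq (\<lambda>x. qcls \<sigma> (x, j))"
proof -
  have mono_F: "F u \<le> F v" if "qhle \<sigma> u v" for u v
    using that adj[of v "F v"] adj[of u "F v"] qhle_trans by blast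
  have F_section: "F (x, j) = x" for x
    using adj[of "(x, j)" x] adj[of "(x, j)" "F (x, j)"] by (simp add: qhle_def)
  show ?thesis
    unfolding galois_insertion_def
  proof (intro conjI allI ballI impI)
    fix q q' assume "q \<in> Qset \<sigma>" "q' \<in> Qset \<sigma>" "Qle \<sigma> q q'"
    then show "Fq q \<le> Fq q'"
      by (auto simp: Qset_def F Qle_qcls_iff mono_F)
  next
    fix x y :: 'a assume "x \<le> y"
    then show "Qle \<sigma> (qcls \<sigma> (x, j)) (qcls \<sigma> (y, j))"
      by (simp add: Qle_qcls_iff qhle_def)
  next
    fix q x assume "q \<in> Qset \<sigma>"
    then show "Fq q \<le> x \<longleftrightarrow> Qle \<sigma> q (qcls \<sigma> (x, j))"
      by (auto simp: Qset_def F Qle_qcls_iff adj)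
  qed (simp_all add: Qset_def F F_section)
qed

lemma galois_insertion_fmap_gmap: "galois_insertion (Qset \<sigma>) (Qle \<sigma>) (fmap \<sigma>) (gmap \<sigma>)"
  unfolding gmap_def[abs_def]
  by (rule galois_insertion_qclsI, rule fmap_qcls) (auto simp: qhle_def)

lemma galois_insertion_hmap_imap: "galois_insertion (Qset \<sigma>) (Qle \<sigma>) (hmap \<sigma>) (imap \<sigma>)"
  unfolding imap_def[abs_def]
  by (rule galois_insertion_qclsI, rule hmap_qcls) (auto simp: qhle_def)

lemma coupling_cost_Qset:
  assumes "\<And>x y. d x y = d y x"
  shows "coupling_cost (Qset \<sigma>) d (fmap \<sigma>) (hmap \<sigma>) = (SUP x. d x (\<sigma> x))"
proof -
  have "(\<lambda>q. d (fmap \<sigma> q) (hmap \<sigma> q)) ` Qset \<sigma> = range (\<lambda>x. d x (\<sigma> x))"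
    unfolding Qset_def image_image using assms
    by (auto simp: fmap_qcls hmap_qcls image_iff)
  then show ?thesis unfolding coupling_cost_def by simp
qed

lemma galois_coupling_QsetI:
  assumes "finite (UNIV :: 'a set)" and "is_module (Qset \<sigma>) (Qle \<sigma>) \<Gamma>"
    and "mod_iso UNIV (\<le>) (pullback (gmap \<sigma>) \<Gamma>) M" and "mod_iso UNIV (\<le>) (pullback (imap \<sigma>) \<Gamma>) N"
  shows "galois_coupling (Qset \<sigma>) (Qle \<sigma>) (fmap \<sigma>) (gmap \<sigma>) (hmap \<sigma>) (imap \<sigma>) \<Gamma> M N"
  using assms finite_Qset po_on_Qle galois_insertion_fmap_gmap galois_insertion_hmap_imap
  unfolding galois_coupling_def by blast

lemma galois_coupling_pullback_hmap:
  assumes "finite (UNIV :: 'a set)" and N: "is_module UNIV (\<le>) N"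
  shows "galois_coupling (Qset \<sigma>) (Qle \<sigma>) (fmap \<sigma>) (gmap \<sigma>) (hmap \<sigma>) (imap \<sigma>)
           (pullback (hmap \<sigma>) N) (pullback \<sigma> N) N"
proof -
  have hmap_gmap: "hmap \<sigma> \<circ> gmap \<sigma> = \<sigma>" and hmap_imap: "hmap \<sigma> \<circ> imap \<sigma> = id"
    by (simp_all add: fun_eq_iff gmap_def imap_def hmap_qcls)
  have "is_module (Qset \<sigma>) (Qle \<sigma>) (pullback (hmap \<sigma>) N)"
    using galois_insertion_hmap_imap
    by (intro is_module_pullback[OF N]) (auto simp: galois_insertion_def)
  moreover have "is_module UNIV (\<le>) (pullback \<sigma> N)"
    using mono_sigma by (intro is_module_pullback[OF N]) (auto simp: mono_def)
  then have "mod_iso UNIV (\<le>) (pullback (gmap \<sigma>) (pullback (hmap \<sigma>) N)) (pullback \<sigma> N)"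
    by (simp add: pullback_pullback hmap_gmap mod_iso_refl)
  moreover have "mod_iso UNIV (\<le>) (pullback (imap \<sigma>) (pullback (hmap \<sigma>) N)) N"
    using N by (simp add: pullback_pullback hmap_imap pullback_id mod_iso_refl)
  ultimately show ?thesis
    using assms(1) galois_coupling_QsetI by blast
qed

end

theorem proposition3p10:
  fixes \<sigma> :: "'a::{finite,order} \<Rightarrow> 'a" and d :: "'a \<Rightarrow> 'a \<Rightarrow> real"
  assumes "is_metric d" and "mono \<sigma>" and "\<forall>x. x \<le> \<sigma> x"
  shows "preorder_rel (qhle \<sigma>)
    \<and> (\<forall>x i. qcls \<sigma> (x, i) = (if \<sigma> x = x then {(x, False), (x, True)} else {(x, i)}))
    \<and> finite (Qset \<sigma>) \<and> po_on (Qset \<sigma>) (Qle \<sigma>)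
    \<and> (\<forall>u v. Qle \<sigma> (qcls \<sigma> u) (qcls \<sigma> v) \<longleftrightarrow> qhle \<sigma> u v)
    \<and> (\<forall>x. fmap \<sigma> (qcls \<sigma> (x, False)) = x \<and> fmap \<sigma> (qcls \<sigma> (x, True)) = \<sigma> x)
    \<and> galois_insertion (Qset \<sigma>) (Qle \<sigma>) (fmap \<sigma>) (gmap \<sigma>)
    \<and> (\<forall>x. hmap \<sigma> (qcls \<sigma> (x, False)) = \<sigma> x \<and> hmap \<sigma> (qcls \<sigma> (x, True)) = x)
    \<and> galois_insertion (Qset \<sigma>) (Qle \<sigma>) (hmap \<sigma>) (imap \<sigma>)
    \<and> (\<forall>(M :: ('a, 'k::field) pmodule) (N :: ('a, 'k) pmodule) (\<Gamma> :: (('a \<times> bool) set, 'k) pmodule).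
          is_module UNIV (\<le>) M \<and> is_module UNIV (\<le>) N \<and> is_module (Qset \<sigma>) (Qle \<sigma>) \<Gamma>
          \<and> mod_iso UNIV (\<le>) (pullback (gmap \<sigma>) \<Gamma>) M \<and> mod_iso UNIV (\<le>) (pullback (imap \<sigma>) \<Gamma>) N
          \<longrightarrow> galois_coupling (Qset \<sigma>) (Qle \<sigma>) (fmap \<sigma>) (gmap \<sigma>) (hmap \<sigma>) (imap \<sigma>) \<Gamma> M N
            \<and> coupling_cost (Qset \<sigma>) d (fmap \<sigma>) (hmap \<sigma>) = (SUP x. d x (\<sigma> x)))
    \<and> (\<forall>N :: ('a, 'k) pmodule. is_module UNIV (\<le>) N \<longrightarrow>
          galois_coupling (Qset \<sigma>) (Qle \<sigma>) (fmap \<sigma>) (gmap \<sigma>) (hmap \<sigma>) (imap \<sigma>)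
            (pullback (hmap \<sigma>) N) (pullback \<sigma> N) N)"
proof -
  interpret inflationary_mono \<sigma>
    using assms(2,3) by unfold_locales auto
  have fin: "finite (UNIV :: 'a set)" by simp
  have cost: "coupling_cost (Qset \<sigma>) d (fmap \<sigma>) (hmap \<sigma>) = (SUP x. d x (\<sigma> x))"
    using assms(1) by (intro coupling_cost_Qset) (simp add: is_metric_def)
  have "fmap \<sigma> (qcls \<sigma> (x, False)) = x \<and> fmap \<sigma> (qcls \<sigma> (x, True)) = \<sigma> x"
    and "hmap \<sigma> (qcls \<sigma> (x, False)) = \<sigma> x \<and> hmap \<sigma> (qcls \<sigma> (x, True)) = x" for x
    by (simp_all add: fmap_qcls hmap_qcls)
  then show ?thesis
    using preorder_rel_qhle qcls_explicit finite_Qset[OF fin] po_on_Qle Qle_qcls_iff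
      galois_insertion_fmap_gmap galois_insertion_hmap_imap cost
      galois_coupling_QsetI[OF fin] galois_coupling_pullback_hmap[OF fin]
    by blast
qed

end
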